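(* Let $H_3(\mathbb{Z})=\langle x,y,z\mid [x,y]=z,\ z\text{ central}\rangle$ be the $3$-dimensional integral Heisenberg group and let $p$ be a prime. If $\pi:H_3(\mathbb{Z})\to Q$ is a surjective homomorphism onto a finite $q$-group $Q$, where $q$ is a prime distinct from $p$, then $\pi(x^p)$ and $\pi(x^pz^m)$ are conjugate in $Q$ for every natural number $m$.
   Context: $[a,b]=aba^{-1}b^{-1}$. *)

theory Defs
  imports "HOL-Algebra.Algebra"
begin

text \<open>The integral Heisenberg group H_3(Z), realised as the group of upper unitriangular
  3x3 integer matrices [[1,a,c],[0,1,b],[0,0,1]], encoded as triples (a,b,c).\<close>

definition heis :: "(int \<times> int \<times> int) monoid" where
  "heis = \<lparr> carrier = UNIV,
            monoid.mult = (\<lambda>(a,b,c) (a',b',c'). (a + a', b + b', c + c' + a * b')),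
            monoid.one = (0, 0, 0) \<rparr>"

definition heis_x :: "int \<times> int \<times> int" where "heis_x = (1, 0, 0)"
definition heis_y :: "int \<times> int \<times> int" where "heis_y = (0, 1, 0)"
definition heis_z :: "int \<times> int \<times> int" where "heis_z = (0, 0, 1)"

definition commutator :: "('a, 'm) monoid_scheme \<Rightarrow> 'a \<Rightarrow> 'a \<Rightarrow> 'a" where
  "commutator G a b = a \<otimes>\<^bsub>G\<^esub> b \<otimes>\<^bsub>G\<^esub> inv\<^bsub>G\<^esub> a \<otimes>\<^bsub>G\<^esub> inv\<^bsub>G\<^esub> b"

lemma heis_group: "group heis"
proof -
  have "\<And>a aa b::int. \<exists>ab. a + ab = 0 \<and> (\<exists>ac. aa + ac = 0 \<and> (\<exists>ba. b + (ba + aa * ab) = 0 \<and>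
          a + ab = 0 \<and> aa + ac = 0 \<and> b + (ba + a * ac) = 0))"
    by (rule_tac x="-a" in exI, simp, rule_tac x="-aa" in exI, simp,
        rule_tac x="-b + aa*a" in exI, simp add: algebra_simps)
  then show ?thesis
    unfolding heis_def
    by (unfold_locales) (auto simp: Units_def algebra_simps)
qed


lemma heis_commutator_xy: "commutator heis heis_x heis_y = heis_z"
proof -
  interpret group heis by (rule heis_group)
  have "inv\<^bsub>heis\<^esub> heis_x = (-1,0,0)"
    by (rule inv_equality) (auto simp: heis_def heis_x_def)
  moreover have "inv\<^bsub>heis\<^esub> heis_y = (0,-1,0)"
    by (rule inv_equality) (auto simp: heis_def heis_y_def)
  ultimately show ?thesis
    by (simp add: commutator_def heis_def heis_x_def heis_y_def heis_z_def)
qed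

lemma heis_z_central: "heis_z \<otimes>\<^bsub>heis\<^esub> g = g \<otimes>\<^bsub>heis\<^esub> heis_z"
  by (auto simp: heis_def heis_z_def split: prod.splits)

end

theory Submission
  imports Defs
begin

text \<open>Conjugating x^a by a power of y shifts it by a multiple of the central element z^a, and
  multiplying by an order(Q)-th power of z is invisible in the finite quotient Q. When a is
  prime to order(Q), these two shifts together reach every power of z (Bezout).\<close>

lemma heis_mult [simp]:
  "(a, b, c) \<otimes>\<^bsub>heis\<^esub> (a', b', c') = (a + a', b + b', c + c' + a * b')"
  by (simp add: heis_def)

lemma carrier_heis [simp]: "carrier heis = UNIV"
  by (simp add: heis_def)

lemma heis_inv: "inv\<^bsub>heis\<^esub> (a, b, c) = (- a, - b, a * b - c)"
  by (rule group.inv_equality[OF heis_group]) (auto simp: heis_def algebra_simps)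

lemma heis_nat_pow_x: "(a, 0, 0) [^]\<^bsub>heis\<^esub> (n::nat) = (int n * a, 0, 0)"
  by (induction n) (auto simp: heis_def algebra_simps)

lemma heis_nat_pow_z: "(0, 0, c) [^]\<^bsub>heis\<^esub> (n::nat) = (0, 0, int n * c)"
  by (induction n) (auto simp: heis_def algebra_simps)

lemma heis_conj_y:
  "(0, b, 0) \<otimes>\<^bsub>heis\<^esub> (a, 0, c) \<otimes>\<^bsub>heis\<^esub> inv\<^bsub>heis\<^esub> (0, b, 0) = (a, 0, c - a * b)"
  by (simp add: heis_inv algebra_simps)

lemma hom_heis_central_mod_order:
  assumes "group Q" "finite (carrier Q)" "\<pi> \<in> hom heis Q"
  shows "\<pi> (a, b, c + int (order Q) * s) = \<pi> (a, b, c)"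
proof -
  interpret Q: group Q by (rule assms(1))
  interpret group_hom heis Q \<pi>
    using assms(1,3) heis_group by (simp add: group_hom_def group_hom_axioms_def)
  have "(a, b, c + int (order Q) * s) = (a, b, c) \<otimes>\<^bsub>heis\<^esub> (0, 0, s) [^]\<^bsub>heis\<^esub> order Q"
    by (simp add: heis_nat_pow_z)
  moreover have "\<pi> (0, 0, s) [^]\<^bsub>Q\<^esub> order Q = \<one>\<^bsub>Q\<^esub>"
    using assms(2) by (intro Q.pow_order_eq_1) simp
  ultimately show ?thesis
    by (simp add: hom_mult hom_nat_pow del: heis_mult)
qed

lemma hom_heis_conjugate_central_shift:
  assumes "group Q" "finite (carrier Q)" "\<pi> \<in> hom heis Q"
    and "coprime a (int (order Q))"
  shows "\<exists>g \<in> carrier Q. \<pi> (a, 0, c) = g \<otimes>\<^bsub>Q\<^esub> \<pi> (a, 0, 0) \<otimes>\<^bsub>Q\<^esub> inv\<^bsub>Q\<^esub> g"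
proof -
  interpret group_hom heis Q \<pi>
    using assms(1,3) heis_group by (simp add: group_hom_def group_hom_axioms_def)
  obtain u v where uv: "u * a + v * int (order Q) = 1"
    using bezout_int[of a "int (order Q)"] assms(4) by auto
  have "c = - a * (- c * u) + int (order Q) * (c * v)"
    using arg_cong[OF uv, of "(*) c"] by (simp add: algebra_simps)
  then have "\<pi> (a, 0, c) = \<pi> (a, 0, - a * (- c * u))"
    using hom_heis_central_mod_order[OF assms(1-3)] by metis
  also have "\<dots> = \<pi> ((0, - c * u, 0) \<otimes>\<^bsub>heis\<^esub> (a, 0, 0) \<otimes>\<^bsub>heis\<^esub> inv\<^bsub>heis\<^esub> (0, - c * u, 0))"
    by (simp only: heis_conj_y) simp
  also have "\<dots> = \<pi> (0, - c * u, 0) \<otimes>\<^bsub>Q\<^esub> \<pi> (a, 0, 0) \<otimes>\<^bsub>Q\<^esub> inv\<^bsub>Q\<^esub> \<pi> (0, - c * u, 0)"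
    by (simp add: hom_mult hom_inv del: heis_mult)
  finally show ?thesis
    by (metis hom_closed carrier_heis UNIV_I)
qed

theorem mainTheorem18:
  fixes Q :: "('b, 'c) monoid_scheme" and \<pi> :: "int \<times> int \<times> int \<Rightarrow> 'b"
    and p q :: nat
  assumes "Factorial_Ring.prime p" and "Factorial_Ring.prime q" and "q \<noteq> p"
    and "group Q" and "finite (carrier Q)" and "\<exists>k::nat. order Q = q ^ k"
    and "\<pi> \<in> hom heis Q" and "\<pi> ` carrier heis = carrier Q"
  shows "\<forall>m::nat. \<exists>g \<in> carrier Q.
           \<pi> (heis_x [^]\<^bsub>heis\<^esub> p \<otimes>\<^bsub>heis\<^esub> heis_z [^]\<^bsub>heis\<^esub> m)
             = g \<otimes>\<^bsub>Q\<^esub> \<pi> (heis_x [^]\<^bsub>heis\<^esub> p) \<otimes>\<^bsub>Q\<^esub> inv\<^bsub>Q\<^esub> g"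
proof
  fix m :: nat
  obtain k where "order Q = q ^ k" using assms(6) by blast
  moreover have "coprime p q" using assms(1-3) by (simp add: primes_coprime)
  ultimately have "coprime (int p) (int (order Q))" by simp
  then have "\<exists>g \<in> carrier Q. \<pi> (int p, 0, int m) = g \<otimes>\<^bsub>Q\<^esub> \<pi> (int p, 0, 0) \<otimes>\<^bsub>Q\<^esub> inv\<^bsub>Q\<^esub> g"
    using hom_heis_conjugate_central_shift assms(4,5,7) by blast
  moreover have "heis_x [^]\<^bsub>heis\<^esub> p = (int p, 0, 0)" "heis_z [^]\<^bsub>heis\<^esub> m = (0, 0, int m)"
    using heis_nat_pow_x[of 1 p] heis_nat_pow_z[of 1 m] by (simp_all add: heis_x_def heis_z_def)
  ultimately show "\<exists>g \<in> carrier Q. \<pi> (heis_x [^]\<^bsub>heis\<^esub> p \<otimes>\<^bsub>heis\<^esub> heis_z [^]\<^bsub>heis\<^esub> m)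
      = g \<otimes>\<^bsub>Q\<^esub> \<pi> (heis_x [^]\<^bsub>heis\<^esub> p) \<otimes>\<^bsub>Q\<^esub> inv\<^bsub>Q\<^esub> g"
    by simp
qed

end
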